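(* Let $n\ge 2$, let $s_i=(i,i+1)\in S_n$ for $1\le i\le n-1$, and let $\pi:S_n\to\mathrm{O}(V)$ be a real representation. Put $g_\pi=\frac{\chi_\pi(1)-\chi_\pi(s_1)}{2}$. Then there exist elements $x_1,\dots,x_{n-1}\in\mathrm{Pin}(V)$ with $\rho(x_i)=\pi(s_i)$ for all $i$, such that $x_i^2=1$ for $1\le i\le n-1$ and $(x_ix_{i+1})^3=1$ for $1\le i\le n-2$, if and only if $g_\pi\equiv 0$ or $3\pmod 4$.
   Context: $V$ is a Euclidean space, $\chi_\pi$ the character of $\pi$. $\mathrm{Pin}(V)$ is the Pin group of $V$, defined inside the Clifford algebra $C(V)$ (the tensor algebra modulo the ideal generated by $v\otimes v+|v|^2$), and $\rho:\mathrm{Pin}(V)\to\mathrm{O}(V)$ is the standard double cover with kernel $\{\pm 1\}$, under which a unit vector $v$ maps to the reflection in $v^\perp$. *)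

theory Defs
  imports "HOL-Analysis.Analysis" "HOL-Combinatorics.Transposition"
begin

text \<open>Euclidean space V is modelled as real^'m with the standard inner product
(every Euclidean space is isometric to such a space). The Clifford algebra C(V),
i.e. tensor algebra modulo v \<otimes> v + |v|^2, is modelled concretely on its standard
basis e_S indexed by subsets S of the (linearly ordered) index type 'm:
an element is a function 'm set \<Rightarrow> real (its coordinates), and
e_S e_T = (-1)^inv(S,T) (-1)^|S \<inter> T| e_(S \<triangle> T), so that e_i^2 = -1 and
e_i e_j = - e_j e_i for i \<noteq> j.\<close>

type_synonym 'm cl = "'m set \<Rightarrow> real"

definition cl_sign :: "'m::{finite,linorder} set \<Rightarrow> 'm set \<Rightarrow> real" where
  "cl_sign S T = (-1) ^ card {(i, j). i \<in> S \<and> j \<in> T \<and> j < i} * (-1) ^ card (S \<inter> T)"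

definition cl_mult :: "'m::{finite,linorder} cl \<Rightarrow> 'm cl \<Rightarrow> 'm cl" where
  "cl_mult a b = (\<lambda>U. \<Sum>S\<in>UNIV. \<Sum>T\<in>UNIV.
      if (S - T) \<union> (T - S) = U then cl_sign S T * a S * b T else 0)"

definition cl_one :: "'m::{finite,linorder} cl" where
  "cl_one = (\<lambda>U. if U = {} then 1 else 0)"

definition cl_vec :: "real^'m::{finite,linorder} \<Rightarrow> 'm cl" where
  "cl_vec v = (\<lambda>U. \<Sum>i\<in>UNIV. if U = {i} then v $ i else 0)"

definition cl_alpha :: "'m::{finite,linorder} cl \<Rightarrow> 'm cl" where
  "cl_alpha x = (\<lambda>S. (-1) ^ card S * x S)"

definition cl_inverse :: "'m::{finite,linorder} cl \<Rightarrow> 'm cl" where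
  "cl_inverse x = (THE y. cl_mult x y = cl_one \<and> cl_mult y x = cl_one)"

definition Pin :: "'m::{finite,linorder} cl set" where
  "Pin = {foldr cl_mult (map cl_vec us) cl_one | us. \<forall>u\<in>set us. norm u = 1}"

text \<open>The double cover \<rho> : Pin(V) \<rightarrow> O(V) (twisted adjoint action),
\<rho>(x) v = \<alpha>(x) v x^{-1}; for a unit vector u, \<rho>(u) is the reflection in u^\<bottom>.\<close>
definition rho :: "('m::{finite,linorder}) cl \<Rightarrow> real^('m::{finite,linorder}) \<Rightarrow> real^('m::{finite,linorder})" where
  "rho x v = (\<chi> i. cl_mult (cl_mult (cl_alpha x) (cl_vec v)) (cl_inverse x) {i})"

definition orth_rep :: "nat \<Rightarrow> ((nat \<Rightarrow> nat) \<Rightarrow> real^'m::finite \<Rightarrow> real^'m) \<Rightarrow> bool" where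
  "orth_rep n \<pi> \<longleftrightarrow>
     (\<forall>\<sigma>. \<sigma> permutes {1..n} \<longrightarrow> orthogonal_transformation (\<pi> \<sigma>)) \<and>
     (\<forall>\<sigma> \<tau>. \<sigma> permutes {1..n} \<longrightarrow> \<tau> permutes {1..n} \<longrightarrow> \<pi> (\<sigma> \<circ> \<tau>) = \<pi> \<sigma> \<circ> \<pi> \<tau>)"

definition character :: "((nat \<Rightarrow> nat) \<Rightarrow> real^'m::finite \<Rightarrow> real^'m) \<Rightarrow> (nat \<Rightarrow> nat) \<Rightarrow> real" where
  "character \<pi> \<sigma> = trace (matrix (\<pi> \<sigma>))"

definition cl_cube :: "'m::{finite,linorder} cl \<Rightarrow> 'm cl" where
  "cl_cube y = cl_mult (cl_mult y y) y"


definition transp :: "nat \<Rightarrow> nat \<Rightarrow> nat \<Rightarrow> nat" where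
  "transp i j = Transposition.transpose i j"

end

theory Submission
  imports Defs "HOL-Library.Function_Algebras"
begin

text \<open>
  Write s = transp 1 2. The orthogonal involution \<pi> s is the product of the reflections in an
  orthonormal basis f_1, ..., f_d of its (-1)-eigenspace, so trace (\<pi> s) = dim V - 2 d and
  g = d. Its lifts to Pin(V) are \<plusminus>f_1 \<cdots> f_d, whose square is (-1)^(d(d+1)/2),
  i.e. 1 exactly when d mod 4 is 0 or 3; since all simple transpositions are conjugate, the
  same holds for every \<pi> s_i. Conversely, given lifts x_i with x_i^2 = 1, the braid relation
  (s_i s_(i+1))^3 = 1 lifts to (x_i x_(i+1))^3 = \<plusminus>1 because ker \<rho> = {\<plusminus>1}, and
  since (x_i (-x_(i+1)))^3 = -(x_i x_(i+1))^3 the signs can be corrected one index at a time.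
\<close>

section \<open>Signs and the Clifford product\<close>

lemma sym_diff_cancel_left [simp]: "sym_diff S (sym_diff S T) = T"
  by blast

lemma sym_diff_cancel_right [simp]: "sym_diff (sym_diff T S) S = T"
  by blast

definition card_sign :: "'a set \<Rightarrow> real" where
  "card_sign A = (-1) ^ card A"

lemma card_sign_cases: "card_sign A = 1 \<or> card_sign A = -1"
  unfolding card_sign_def by (cases "even (card A)") auto

lemma card_sign_square: "card_sign A * card_sign A = 1"
  using card_sign_cases[of A] by auto

lemma card_sign_sym_diff:
  assumes "finite A" "finite B"
  shows "card_sign (sym_diff A B) = card_sign A * card_sign B"
proof -
  have "card (A \<union> B) = card (sym_diff A B) + card (A \<inter> B)"
    using assms by (subst card_Un_disjoint[symmetric]) (auto intro: arg_cong[where f = card])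
  then have "card A + card B = card (sym_diff A B) + 2 * card (A \<inter> B)"
    using card_Un_Int[OF assms] by simp
  then have "(-1::real) ^ card A * (-1) ^ card B = (-1) ^ (card (sym_diff A B) + 2 * card (A \<inter> B))"
    by (simp flip: power_add)
  then have "(-1::real) ^ card A * (-1) ^ card B = (-1) ^ card (sym_diff A B)"
    by (simp add: power_add power_mult)
  then show ?thesis
    unfolding card_sign_def by simp
qed

lemma card_sign_image: "inj_on f A \<Longrightarrow> card_sign (f ` A) = card_sign A"
  unfolding card_sign_def by (simp add: card_image)

definition cl_inversions :: "'m::linorder set \<Rightarrow> 'm set \<Rightarrow> ('m \<times> 'm) set" where
  "cl_inversions S T = {(i, j). i \<in> S \<and> j \<in> T \<and> j < i}"

lemma cl_sign_eq: "cl_sign S T = card_sign (cl_inversions S T) * card_sign (S \<inter> T)"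
  unfolding cl_sign_def card_sign_def cl_inversions_def by simp

lemma cl_sign_empty [simp]: "cl_sign {} T = 1" "cl_sign S {} = 1"
  unfolding cl_sign_def by simp_all

lemma cl_sign_square: "cl_sign S T * cl_sign S T = 1"
  unfolding cl_sign_eq by (metis card_sign_square mult.assoc mult.left_commute mult_1_right)

lemma cl_sign_square_cancel: "cl_sign S T * x * (cl_sign S T * y) = x * y"
proof -
  have "cl_sign S T * x * (cl_sign S T * y) = (cl_sign S T * cl_sign S T) * (x * y)"
    by (simp only: ac_simps)
  then show ?thesis
    by (simp add: cl_sign_square)
qed

lemma cl_sign_singletons: "cl_sign {i} {j} = (if j \<le> i then -1 else 1)"
proof -
  have "{(a, b). a \<in> {i} \<and> b \<in> {j} \<and> b < a} = (if j < i then {(i, j)} else {})"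
    by auto
  then show ?thesis
    unfolding cl_sign_def by auto
qed

lemma cl_sign_singleton_swap:
  assumes "i \<in> S"
  shows "cl_sign S {i} * cl_sign {i} S = - card_sign S"
proof -
  let ?A = "{a\<in>S. i < a}" and ?B = "{b\<in>S. b < i}"
  have "cl_inversions S {i} = (\<lambda>a. (a, i)) ` ?A" "cl_inversions {i} S = Pair i ` ?B"
    unfolding cl_inversions_def by auto
  then have "card_sign (cl_inversions S {i}) * card_sign (cl_inversions {i} S)
      = card_sign (sym_diff ?A ?B)"
    by (simp add: card_sign_image inj_on_def card_sign_sym_diff)
  also have "sym_diff ?A ?B = S - {i}"
    using assms by auto
  also have "card_sign (S - {i}) = - card_sign S"
  proof -
    have "card S = Suc (card (S - {i}))"
      by (rule card_Suc_Diff1[symmetric]) (use assms in auto)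
    then show ?thesis
      unfolding card_sign_def by simp
  qed
  finally show ?thesis
    unfolding cl_sign_eq using assms card_sign_square[of "S \<inter> {i}"]
    by (simp add: Int_commute ac_simps)
qed

lemma cl_sign_cocycle:
  fixes S T W :: "'m::{finite,linorder} set"
  shows "cl_sign S T * cl_sign (sym_diff S T) W = cl_sign S (sym_diff T W) * cl_sign T W"
proof -
  have "cl_inversions (sym_diff S T) W = sym_diff (cl_inversions S W) (cl_inversions T W)"
    "cl_inversions S (sym_diff T W) = sym_diff (cl_inversions S T) (cl_inversions S W)"
    "sym_diff S T \<inter> W = sym_diff (S \<inter> W) (T \<inter> W)" "S \<inter> sym_diff T W = sym_diff (S \<inter> T) (S \<inter> W)"
    unfolding cl_inversions_def by auto
  then show ?thesis
    unfolding cl_sign_eq by (simp add: card_sign_sym_diff ac_simps)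
qed

lemma cl_mult_eq: "cl_mult a b U = (\<Sum>S\<in>UNIV. cl_sign S (sym_diff S U) * a S * b (sym_diff S U))"
proof -
  have "sym_diff S T = U \<longleftrightarrow> T = sym_diff S U" for S T :: "'a set"
    by blast
  then show ?thesis
    unfolding cl_mult_def by simp
qed

lemma cl_mult_assoc: "cl_mult (cl_mult a b) c = cl_mult a (cl_mult b c)"
proof
  fix U :: "'a set"
  let ?f = "\<lambda>S R. cl_sign R (sym_diff R U) * cl_sign S (sym_diff S R)
    * a S * b (sym_diff S R) * c (sym_diff R U)"
  let ?g = "\<lambda>S T. cl_sign S (sym_diff S U) * cl_sign T (sym_diff T (sym_diff S U))
    * a S * b T * c (sym_diff T (sym_diff S U))"
  have "cl_mult (cl_mult a b) c U = (\<Sum>R\<in>UNIV. \<Sum>S\<in>UNIV. ?f S R)"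
    by (simp add: cl_mult_eq sum_distrib_left sum_distrib_right ac_simps)
  also have "\<dots> = (\<Sum>S\<in>UNIV. \<Sum>R\<in>UNIV. ?f S R)"
    by (rule sum.swap)
  also have "\<dots> = (\<Sum>S\<in>UNIV. \<Sum>T\<in>UNIV. ?f S (sym_diff S T))"
  proof (rule sum.cong[OF refl])
    fix S :: "'a set"
    show "(\<Sum>R\<in>UNIV. ?f S R) = (\<Sum>T\<in>UNIV. ?f S (sym_diff S T))"
      by (rule sum.reindex_bij_witness[of _ "sym_diff S" "sym_diff S"]) auto
  qed
  also have "\<dots> = (\<Sum>S\<in>UNIV. \<Sum>T\<in>UNIV. ?g S T)"
  proof (intro sum.cong refl)
    fix S T :: "'a set"
    have "sym_diff (sym_diff S T) U = sym_diff T (sym_diff S U)"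
      by blast
    then show "?f S (sym_diff S T) = ?g S T"
      using cl_sign_cocycle[of S T "sym_diff T (sym_diff S U)"] by (simp add: ac_simps)
  qed
  also have "\<dots> = cl_mult a (cl_mult b c) U"
    by (simp add: cl_mult_eq sum_distrib_left ac_simps)
  finally show "cl_mult (cl_mult a b) c U = cl_mult a (cl_mult b c) U" .
qed

definition cl_basis :: "'m::{finite,linorder} set \<Rightarrow> 'm cl" where
  "cl_basis S = (\<lambda>U. if U = S then 1 else 0)"

definition cl_scale :: "real \<Rightarrow> 'm::{finite,linorder} cl \<Rightarrow> 'm cl" where
  "cl_scale c a = (\<lambda>U. c * a U)"

lemma cl_one_eq_basis: "cl_one = cl_basis {}"
  unfolding cl_one_def cl_basis_def by simp

lemma cl_mult_basis_left: "cl_mult (cl_basis T) a U = cl_sign T (sym_diff T U) * a (sym_diff T U)"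
proof -
  have "cl_mult (cl_basis T) a U
      = (\<Sum>S\<in>UNIV. if S = T then cl_sign S (sym_diff S U) * a (sym_diff S U) else 0)"
    unfolding cl_mult_eq cl_basis_def by (rule sum.cong) auto
  then show ?thesis
    by simp
qed

lemma cl_mult_basis_right: "cl_mult a (cl_basis T) U = cl_sign (sym_diff T U) T * a (sym_diff T U)"
proof -
  have "cl_mult a (cl_basis T) U
      = (\<Sum>S\<in>UNIV. if S = sym_diff T U then cl_sign S (sym_diff S U) * a S else 0)"
    unfolding cl_mult_eq cl_basis_def by (rule sum.cong) auto
  then show ?thesis
    by simp
qed

lemma cl_mult_one_left [simp]: "cl_mult cl_one a = a"
  by (rule ext) (simp add: cl_one_eq_basis cl_mult_basis_left)

lemma cl_mult_one_right [simp]: "cl_mult a cl_one = a"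
  by (rule ext) (simp add: cl_one_eq_basis cl_mult_basis_right)

lemma cl_scale_scale [simp]: "cl_scale c (cl_scale d a) = cl_scale (c * d) a"
  unfolding cl_scale_def by (simp add: mult.assoc)

lemma cl_scale_one [simp]: "cl_scale 1 a = a"
  unfolding cl_scale_def by simp

lemma cl_scale_minus_one [simp]: "cl_scale (-1) a = - a"
  unfolding cl_scale_def by auto

lemma cl_mult_scale_left: "cl_mult (cl_scale c a) b = cl_scale c (cl_mult a b)"
  unfolding cl_scale_def by (rule ext) (simp add: cl_mult_eq sum_distrib_left ac_simps)

lemma cl_mult_scale_right: "cl_mult a (cl_scale c b) = cl_scale c (cl_mult a b)"
  unfolding cl_scale_def by (rule ext) (simp add: cl_mult_eq sum_distrib_left ac_simps)

lemma cl_mult_minus_left [simp]: "cl_mult (- a) b = - cl_mult a b"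
  using cl_mult_scale_left[of "-1" a b] by simp

lemma cl_mult_minus_right [simp]: "cl_mult a (- b) = - cl_mult a b"
  using cl_mult_scale_right[of a "-1" b] by simp

lemma cl_mult_diff_left: "cl_mult (a - b) c = cl_mult a c - cl_mult b c"
  by (rule ext) (simp add: cl_mult_eq sum_subtractf algebra_simps)

lemma minus_cl_one_neq_cl_one: "- cl_one \<noteq> (cl_one :: 'm::{finite,linorder} cl)"
proof -
  have "(- cl_one) {} \<noteq> (cl_one :: 'm cl) {}"
    by (simp add: cl_one_def)
  then show ?thesis
    by metis
qed

lemma cl_cube_uminus: "cl_cube (- a) = - cl_cube a"
  unfolding cl_cube_def by simp

lemma cl_mult_basis:
  "cl_mult (cl_basis S) (cl_basis T) = cl_scale (cl_sign S T) (cl_basis (sym_diff S T))"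
proof
  fix U
  have "sym_diff S U = T \<longleftrightarrow> U = sym_diff S T"
    by blast
  then show "cl_mult (cl_basis S) (cl_basis T) U
      = cl_scale (cl_sign S T) (cl_basis (sym_diff S T)) U"
    unfolding cl_mult_basis_left by (simp add: cl_basis_def cl_scale_def)
qed

lemma cl_basis_singleton_square: "cl_mult (cl_basis {i}) (cl_basis {i}) = - cl_one"
  by (simp add: cl_mult_basis cl_sign_singletons cl_one_eq_basis)

lemma cl_basis_anticomm:
  "cl_mult (cl_basis {i}) (cl_basis {j}) + cl_mult (cl_basis {j}) (cl_basis {i})
     = (if i = j then cl_scale (-2) cl_one else 0)"
proof (cases "i = j")
  case True
  then show ?thesis
    by (intro ext) (simp add: cl_mult_basis cl_sign_singletons cl_one_eq_basis cl_scale_def)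
next
  case False
  then have "sym_diff {j} {i} = sym_diff {i} {j}" "cl_sign {j} {i} = - cl_sign {i} {j}"
    by (auto simp: cl_sign_singletons)
  with False show ?thesis
    by (intro ext) (simp add: cl_mult_basis cl_scale_def)
qed

lemma cl_alpha_mult: "cl_alpha (cl_mult a b) = cl_mult (cl_alpha a) (cl_alpha b)"
proof
  fix U :: "'a set"
  have *: "card_sign U * (cl_sign S (sym_diff S U) * a S * b (sym_diff S U))
      = cl_sign S (sym_diff S U) * (card_sign S * a S)
        * (card_sign (sym_diff S U) * b (sym_diff S U))"
    for S
  proof -
    have "card_sign U = card_sign S * card_sign (sym_diff S U)"
      using card_sign_sym_diff[of S "sym_diff S U"] by simp
    then show ?thesis
      by (simp add: ac_simps)
  qed
  show "cl_alpha (cl_mult a b) U = cl_mult (cl_alpha a) (cl_alpha b) U"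
    unfolding cl_alpha_def cl_mult_eq card_sign_def[symmetric] sum_distrib_left
    by (rule sum.cong[OF refl]) (rule *)
qed

lemma cl_alpha_one: "cl_alpha cl_one = cl_one"
  unfolding cl_alpha_def cl_one_def by auto

lemma cl_scalar_if_twisted_commute:
  assumes "\<And>i. cl_mult (cl_alpha x) (cl_basis {i}) = cl_mult (cl_basis {i}) x"
  shows "x = cl_scale (x {}) cl_one"
proof
  fix S
  show "x S = cl_scale (x {}) cl_one S"
  proof (cases "S = {}")
    case False
    then obtain i where i: "i \<in> S"
      by blast
    have "cl_mult (cl_alpha x) (cl_basis {i}) (sym_diff {i} S)
        = cl_mult (cl_basis {i}) x (sym_diff {i} S)"
      using assms by simp
    then have "cl_sign S {i} * (cl_sign S {i} * card_sign S * x S)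
        = cl_sign S {i} * (cl_sign {i} S * x S)"
      by (simp add: cl_mult_basis_left cl_mult_basis_right cl_alpha_def card_sign_def)
    then have "card_sign S * x S = - card_sign S * x S"
      using cl_sign_square[of S "{i}"] cl_sign_singleton_swap[OF i]
      by (simp add: mult.assoc[symmetric])
    moreover have "card_sign S \<noteq> 0"
      using card_sign_cases[of S] by auto
    ultimately show ?thesis
      using False by (simp add: cl_scale_def cl_one_def)
  qed (simp add: cl_scale_def cl_one_def)
qed

text \<open>Left multiplication by a unit vector preserves this form, which is what pins the
  scalars in the kernel of \<rho> down to \<plusminus>1.\<close>

definition cl_inner :: "'m::{finite,linorder} cl \<Rightarrow> 'm cl \<Rightarrow> real" where
  "cl_inner a b = (\<Sum>S\<in>UNIV. a S * b S)"

lemma cl_inner_uminus_right: "cl_inner a (- b) = - cl_inner a b"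
  unfolding cl_inner_def by (simp add: sum_negf)

lemma cl_inner_mult_basis:
  "cl_inner (cl_mult (cl_basis T) a) (cl_mult (cl_basis T) b) = cl_inner a b"
proof -
  have "cl_inner (cl_mult (cl_basis T) a) (cl_mult (cl_basis T) b)
      = (\<Sum>U\<in>UNIV. a (sym_diff T U) * b (sym_diff T U))"
    unfolding cl_inner_def cl_mult_basis_left
    by (intro sum.cong refl) (simp add: cl_sign_square_cancel)
  also have "\<dots> = cl_inner a b"
    unfolding cl_inner_def by (rule sum.reindex_bij_witness[of _ "sym_diff T" "sym_diff T"]) auto
  finally show ?thesis .
qed

lemma cl_inner_mult_basis_skew:
  "cl_inner (cl_mult (cl_basis {i}) a) b = - cl_inner a (cl_mult (cl_basis {i}) b)"
  using cl_inner_mult_basis[of "{i}" a "cl_mult (cl_basis {i}) b"]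
  by (simp add: cl_basis_singleton_square cl_inner_uminus_right flip: cl_mult_assoc)

section \<open>Vectors and reflections\<close>

lemma cl_vec_eq: "cl_vec v = (\<lambda>U. \<Sum>i\<in>UNIV. cl_scale (v $ i) (cl_basis {i}) U)"
  unfolding cl_vec_def cl_basis_def cl_scale_def by (simp add: if_distrib cong: if_cong)

lemma cl_vec_singleton: "cl_vec w {i} = w $ i"
  unfolding cl_vec_def by simp

lemma cl_vec_axis: "cl_vec (axis i 1) = cl_basis {i}"
proof
  fix U
  have "cl_vec (axis i 1) U = (\<Sum>j\<in>UNIV. if j = i then cl_basis {i} U else 0)"
    unfolding cl_vec_def cl_basis_def by (intro sum.cong refl) (auto simp: axis_def)
  then show "cl_vec (axis i 1) U = cl_basis {i} U"
    by simp
qed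

lemma cl_vec_uminus: "cl_vec (- u) = - cl_vec u"
  by (rule ext) (simp add: cl_vec_eq cl_scale_def sum_negf)

lemma cl_vec_diff_scaleR: "cl_vec (v - c *\<^sub>R u) = cl_vec v + cl_scale (- c) (cl_vec u)"
  by (rule ext)
    (simp add: cl_vec_eq cl_scale_def algebra_simps sum_subtractf sum_distrib_left sum_negf)

lemma cl_mult_sum_left: "cl_mult (\<lambda>S. \<Sum>i\<in>I. f i S) a U = (\<Sum>i\<in>I. cl_mult (f i) a U)"
  unfolding cl_mult_eq sum_distrib_left sum_distrib_right by (rule sum.swap)

lemma cl_mult_sum_right: "cl_mult a (\<lambda>S. \<Sum>i\<in>I. f i S) U = (\<Sum>i\<in>I. cl_mult a (f i) U)"
  unfolding cl_mult_eq sum_distrib_left sum_distrib_right by (rule sum.swap)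

lemma cl_mult_vec_left: "cl_mult (cl_vec u) a U = (\<Sum>i\<in>UNIV. u $ i * cl_mult (cl_basis {i}) a U)"
  unfolding cl_vec_eq cl_mult_sum_left cl_mult_scale_left by (simp add: cl_scale_def)

lemma cl_mult_vec_right: "cl_mult a (cl_vec u) U = (\<Sum>i\<in>UNIV. u $ i * cl_mult a (cl_basis {i}) U)"
  unfolding cl_vec_eq cl_mult_sum_right cl_mult_scale_right by (simp add: cl_scale_def)

lemma cl_vec_anticomm:
  "cl_mult (cl_vec u) (cl_vec w) + cl_mult (cl_vec w) (cl_vec u) = cl_scale (-2 * (u \<bullet> w)) cl_one"
proof
  fix U
  have "(cl_mult (cl_vec u) (cl_vec w) + cl_mult (cl_vec w) (cl_vec u)) U
      = (\<Sum>j\<in>UNIV. \<Sum>i\<in>UNIV. u $ i * w $ j * cl_mult (cl_basis {i}) (cl_basis {j}) U)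
      + (\<Sum>i\<in>UNIV. \<Sum>j\<in>UNIV. u $ i * w $ j * cl_mult (cl_basis {j}) (cl_basis {i}) U)"
    by (simp add: cl_mult_vec_left cl_mult_vec_right sum_distrib_left ac_simps)
  also have "\<dots> = (\<Sum>i\<in>UNIV. \<Sum>j\<in>UNIV. u $ i * w $ j *
      (cl_mult (cl_basis {i}) (cl_basis {j}) + cl_mult (cl_basis {j}) (cl_basis {i})) U)"
    by (subst (1) sum.swap) (simp add: sum.distrib algebra_simps)
  also have "\<dots> = (\<Sum>i\<in>UNIV. u $ i * w $ i * cl_scale (-2) cl_one U)"
    unfolding cl_basis_anticomm
    by (simp add: if_distrib[of "\<lambda>f. f U"] if_distrib[of "\<lambda>x. _ * x"] cong: if_cong)
  also have "\<dots> = cl_scale (-2 * (u \<bullet> w)) cl_one U"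
    by (simp add: cl_scale_def inner_vec_def sum_distrib_left sum_negf ac_simps)
  finally show "(cl_mult (cl_vec u) (cl_vec w) + cl_mult (cl_vec w) (cl_vec u)) U
      = cl_scale (-2 * (u \<bullet> w)) cl_one U" .
qed

lemma cl_vec_square: "cl_mult (cl_vec u) (cl_vec u) = cl_scale (- (u \<bullet> u)) cl_one"
proof
  fix U
  show "cl_mult (cl_vec u) (cl_vec u) U = cl_scale (- (u \<bullet> u)) cl_one U"
    using fun_cong[OF cl_vec_anticomm[of u u], of U] by (simp add: cl_scale_def)
qed

lemma cl_vec_unit_square: "norm u = 1 \<Longrightarrow> cl_mult (cl_vec u) (cl_vec u) = - cl_one"
  by (simp add: cl_vec_square dot_square_norm)

lemma cl_vec_anticomm_orthogonal:
  "u \<bullet> w = 0 \<Longrightarrow> cl_mult (cl_vec u) (cl_vec w) = - cl_mult (cl_vec w) (cl_vec u)"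
  using cl_vec_anticomm[of u w] by (simp add: eq_neg_iff_add_eq_0 cl_scale_def zero_fun_def)

lemma cl_alpha_vec: "cl_alpha (cl_vec v) = - cl_vec v"
proof
  fix S :: "'a set"
  have "(-1) ^ card S * (v $ i * cl_basis {i} S) = - (v $ i * cl_basis {i} S)" for i
    by (simp add: cl_basis_def)
  then show "cl_alpha (cl_vec v) S = (- cl_vec v) S"
    unfolding cl_alpha_def cl_vec_eq cl_scale_def by (simp add: sum_distrib_left flip: sum_negf)
qed

lemma cl_inner_mult_vec_skew:
  "cl_inner (cl_mult (cl_vec u) a) b = - cl_inner a (cl_mult (cl_vec u) b)"
proof -
  have "cl_inner (cl_mult (cl_vec u) a) b
      = (\<Sum>i\<in>UNIV. u $ i * cl_inner (cl_mult (cl_basis {i}) a) b)"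
    unfolding cl_inner_def cl_mult_vec_left sum_distrib_right sum_distrib_left
    by (subst sum.swap) (simp add: ac_simps)
  also have "\<dots> = - (\<Sum>i\<in>UNIV. u $ i * cl_inner a (cl_mult (cl_basis {i}) b))"
    by (simp add: cl_inner_mult_basis_skew sum_negf)
  also have "(\<Sum>i\<in>UNIV. u $ i * cl_inner a (cl_mult (cl_basis {i}) b))
      = cl_inner a (cl_mult (cl_vec u) b)"
    unfolding cl_inner_def cl_mult_vec_left sum_distrib_right sum_distrib_left
    by (subst sum.swap) (simp add: ac_simps)
  finally show ?thesis .
qed

definition reflection :: "'a::real_inner \<Rightarrow> 'a \<Rightarrow> 'a" where
  "reflection u v = v - (2 * (u \<bullet> v)) *\<^sub>R u"

lemma reflection_reflection:
  assumes "norm u = 1"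
  shows "reflection u (reflection u v) = v"
proof -
  have "u \<bullet> u = 1"
    using assms by (simp add: dot_square_norm)
  then have "u \<bullet> reflection u v = - (u \<bullet> v)"
    unfolding reflection_def by (simp add: inner_diff_right)
  then show ?thesis
    unfolding reflection_def[of u "reflection u v"] by (simp add: reflection_def)
qed

lemma cl_vec_reflection:
  assumes "norm u = 1"
  shows "cl_mult (cl_mult (cl_vec u) (cl_vec w)) (cl_vec u) = cl_vec (reflection u w)"
proof -
  have "cl_mult (cl_vec u) (cl_vec w)
      = cl_scale (-2 * (u \<bullet> w)) cl_one - cl_mult (cl_vec w) (cl_vec u)"
    using cl_vec_anticomm[of u w] by (simp add: eq_diff_eq)
  then have "cl_mult (cl_mult (cl_vec u) (cl_vec w)) (cl_vec u)
      = cl_scale (-2 * (u \<bullet> w)) (cl_vec u) - cl_mult (cl_vec w) (cl_mult (cl_vec u) (cl_vec u))"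
    by (simp add: cl_mult_diff_left cl_mult_scale_left cl_mult_assoc)
  also have "\<dots> = cl_vec (reflection u w)"
    unfolding cl_vec_unit_square[OF assms] reflection_def cl_vec_diff_scaleR by simp
  finally show ?thesis .
qed

section \<open>The group Pin(V) and its double cover\<close>

definition cl_vec_prod :: "(real^'m::{finite,linorder}) list \<Rightarrow> 'm cl" where
  "cl_vec_prod us = foldr cl_mult (map cl_vec us) cl_one"

definition reflections :: "'a::real_inner list \<Rightarrow> 'a \<Rightarrow> 'a" where
  "reflections us = foldr (\<lambda>u f. reflection u \<circ> f) us id"

lemma cl_vec_prod_simps [simp]:
  "cl_vec_prod [] = cl_one" "cl_vec_prod (u # us) = cl_mult (cl_vec u) (cl_vec_prod us)"
  unfolding cl_vec_prod_def by simp_all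

lemma reflections_simps [simp]:
  "reflections [] = id" "reflections (u # us) = reflection u \<circ> reflections us"
  unfolding reflections_def by simp_all

lemma cl_vec_prod_append: "cl_vec_prod (us @ vs) = cl_mult (cl_vec_prod us) (cl_vec_prod vs)"
  by (induction us) (simp_all add: cl_mult_assoc)

lemma reflections_append: "reflections (us @ vs) = reflections us \<circ> reflections vs"
  by (induction us) (simp_all add: comp_assoc)

lemma Pin_iff: "x \<in> Pin \<longleftrightarrow> (\<exists>us. (\<forall>u\<in>set us. norm u = 1) \<and> x = cl_vec_prod us)"
  unfolding Pin_def cl_vec_prod_def by blast

lemma cl_vec_prod_in_Pin: "\<forall>u\<in>set us. norm u = 1 \<Longrightarrow> cl_vec_prod us \<in> Pin"
  unfolding Pin_iff by blast

lemma cl_inverse_unique: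
  assumes "cl_mult x y = cl_one" "cl_mult y x = cl_one"
  shows "cl_inverse x = y"
  unfolding cl_inverse_def
proof (rule the_equality)
  fix z
  assume z: "cl_mult x z = cl_one \<and> cl_mult z x = cl_one"
  have "z = cl_mult (cl_mult z x) y"
    using assms(1) by (simp add: cl_mult_assoc)
  then show "z = y"
    using z by simp
qed (use assms in simp)

lemma cl_vec_prod_mult_inverse:
  assumes "\<forall>u\<in>set us. norm u = 1"
  shows "cl_mult (cl_vec_prod us) (cl_vec_prod (rev (map uminus us))) = cl_one"
  using assms
proof (induction us)
  case (Cons u us)
  have "cl_mult (cl_vec_prod (u # us)) (cl_vec_prod (rev (map uminus (u # us))))
      = - cl_mult (cl_vec u) (cl_mult (cl_mult (cl_vec_prod us) (cl_vec_prod (rev (map uminus us))))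
          (cl_vec u))"
    by (simp add: cl_vec_prod_append cl_vec_uminus cl_mult_assoc)
  then show ?case
    using Cons by (simp add: cl_vec_unit_square)
qed simp

lemma cl_vec_prod_inverse_mult:
  assumes "\<forall>u\<in>set us. norm u = 1"
  shows "cl_mult (cl_vec_prod (rev (map uminus us))) (cl_vec_prod us) = cl_one"
  using assms
proof (induction us)
  case (Cons u us)
  have "cl_mult (cl_vec_prod (rev (map uminus (u # us)))) (cl_vec_prod (u # us))
      = - cl_mult (cl_vec_prod (rev (map uminus us))) (cl_mult (cl_mult (cl_vec u) (cl_vec u))
          (cl_vec_prod us))"
    by (simp add: cl_vec_prod_append cl_vec_uminus cl_mult_assoc)
  then show ?case
    using Cons by (simp add: cl_vec_unit_square)
qed simp

lemma cl_vec_prod_inverse: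
  "\<forall>u\<in>set us. norm u = 1 \<Longrightarrow>
    cl_inverse (cl_vec_prod us) = cl_vec_prod (rev (map uminus us))"
  by (intro cl_inverse_unique cl_vec_prod_mult_inverse cl_vec_prod_inverse_mult)

lemma cl_twisted_conj_vec_prod:
  assumes "\<forall>u\<in>set us. norm u = 1"
  shows "cl_mult (cl_mult (cl_alpha (cl_vec_prod us)) (cl_vec v)) (cl_inverse (cl_vec_prod us))
    = cl_vec (reflections us v)"
  unfolding cl_vec_prod_inverse[OF assms]
  using assms
proof (induction us)
  case (Cons u us)
  let ?conj = "\<lambda>us. cl_mult (cl_mult (cl_alpha (cl_vec_prod us)) (cl_vec v))
    (cl_vec_prod (rev (map uminus us)))"
  have "?conj (u # us) = cl_mult (cl_mult (cl_vec u) (?conj us)) (cl_vec u)"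
    by (simp add: cl_alpha_mult cl_alpha_vec cl_vec_prod_append cl_vec_uminus cl_mult_assoc)
  then show ?case
    using Cons by (simp add: cl_vec_reflection)
qed (simp add: cl_alpha_one)

lemma rho_cl_vec_prod: "\<forall>u\<in>set us. norm u = 1 \<Longrightarrow> rho (cl_vec_prod us) = reflections us"
  by (rule ext) (simp add: rho_def cl_twisted_conj_vec_prod cl_vec_singleton)

lemma Pin_mult: "x \<in> Pin \<Longrightarrow> y \<in> Pin \<Longrightarrow> cl_mult x y \<in> Pin"
  unfolding Pin_iff by (metis Un_iff cl_vec_prod_append set_append)

lemma rho_mult:
  assumes "x \<in> Pin" "y \<in> Pin"
  shows "rho (cl_mult x y) = rho x \<circ> rho y"
proof -
  obtain us vs where us: "\<forall>u\<in>set us. norm u = 1" "x = cl_vec_prod us"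
    and vs: "\<forall>v\<in>set vs. norm v = 1" "y = cl_vec_prod vs"
    using assms unfolding Pin_iff by blast
  have "rho (cl_mult x y) = rho (cl_vec_prod (us @ vs))"
    by (simp add: us vs cl_vec_prod_append)
  also have "\<dots> = reflections (us @ vs)"
    by (rule rho_cl_vec_prod) (use us vs in auto)
  finally show ?thesis
    by (simp add: reflections_append rho_cl_vec_prod us vs)
qed

lemma Pin_inverse:
  assumes "x \<in> Pin"
  shows "cl_inverse x \<in> Pin" and "cl_mult x (cl_inverse x) = cl_one"
    and "cl_mult (cl_inverse x) x = cl_one"
proof -
  obtain us where us: "\<forall>u\<in>set us. norm u = 1" "x = cl_vec_prod us"
    using assms unfolding Pin_iff by blast
  then show "cl_inverse x \<in> Pin"
    by (auto simp: cl_vec_prod_inverse intro!: cl_vec_prod_in_Pin)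
  show "cl_mult x (cl_inverse x) = cl_one" "cl_mult (cl_inverse x) x = cl_one"
    using us
    by (simp_all add: cl_vec_prod_inverse cl_vec_prod_mult_inverse cl_vec_prod_inverse_mult)
qed

lemma Pin_uminus:
  fixes x :: "'m::{finite,linorder} cl"
  assumes "x \<in> Pin"
  shows "- x \<in> Pin" "rho (- x) = rho x"
proof -
  obtain u :: "real^'m::{finite,linorder}" where u: "norm u = 1"
    using norm_axis_1 by blast
  define w where "w = cl_vec_prod [u, u]"
  have w: "w \<in> Pin"
    unfolding w_def using u by (intro cl_vec_prod_in_Pin) simp
  have "- x = cl_mult w x"
    unfolding w_def by (simp add: cl_vec_unit_square[OF u] flip: cl_mult_assoc)
  moreover have "rho w = id"
    using rho_cl_vec_prod[of "[u, u]"] u by (simp add: w_def fun_eq_iff reflection_reflection)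
  ultimately show "- x \<in> Pin" "rho (- x) = rho x"
    using assms w by (simp_all add: Pin_mult rho_mult)
qed

lemma Pin_cube: "x \<in> Pin \<Longrightarrow> cl_cube x \<in> Pin \<and> rho (cl_cube x) = rho x \<circ> rho x \<circ> rho x"
  unfolding cl_cube_def by (simp add: Pin_mult rho_mult)

lemma cl_inner_vec_prod:
  "\<forall>u\<in>set us. norm u = 1 \<Longrightarrow> cl_inner (cl_vec_prod us) (cl_vec_prod us) = 1"
proof (induction us)
  case Nil
  have "cl_inner cl_one cl_one = 1"
    unfolding cl_inner_def cl_one_def by (simp add: if_distrib cong: if_cong)
  then show ?case
    by simp
next
  case (Cons u us)
  then show ?case
    by (simp add: cl_inner_mult_vec_skew cl_vec_unit_square cl_inner_uminus_right
        flip: cl_mult_assoc)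
qed

lemma Pin_rho_eq_id:
  assumes "x \<in> Pin" "rho x = id"
  shows "x = cl_one \<or> x = - cl_one"
proof -
  obtain us where us: "\<forall>u\<in>set us. norm u = 1" "x = cl_vec_prod us"
    using assms(1) unfolding Pin_iff by blast
  then have "reflections us = id"
    using assms(2) by (simp add: rho_cl_vec_prod)
  then have conj: "cl_mult (cl_mult (cl_alpha x) (cl_vec v)) (cl_inverse x) = cl_vec v" for v
    using cl_twisted_conj_vec_prod[OF us(1)] us(2) by simp
  have "cl_mult (cl_alpha x) (cl_basis {i}) = cl_mult (cl_basis {i}) x" for i
  proof -
    have "cl_mult (cl_alpha x) (cl_vec (axis i 1))
        = cl_mult (cl_mult (cl_mult (cl_alpha x) (cl_vec (axis i 1))) (cl_inverse x)) x"
      using Pin_inverse(3)[OF assms(1)] by (simp add: cl_mult_assoc)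
    then show ?thesis
      using conj[of "axis i 1"] by (simp add: cl_vec_axis)
  qed
  then have x: "x = cl_scale (x {}) cl_one"
    by (rule cl_scalar_if_twisted_commute)
  have "cl_inner x x = 1"
    using cl_inner_vec_prod[OF us(1)] us(2) by simp
  then have "x {} * x {} = 1"
    by (subst (asm) (1 2) x)
      (simp add: cl_inner_def cl_scale_def cl_one_def if_distrib cong: if_cong)
  then have "x {} = 1 \<or> x {} = -1"
    using square_eq_1_iff by blast
  then show ?thesis
    using x by auto
qed

lemma Pin_rho_eq_cases:
  assumes "x \<in> Pin" "y \<in> Pin" "rho x = rho y"
  shows "x = y \<or> x = - y"
proof -
  let ?z = "cl_mult x (cl_inverse y)"
  have "?z \<in> Pin"
    using assms by (simp add: Pin_mult Pin_inverse)
  moreover have "rho ?z = id"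
  proof -
    have "rho y \<circ> rho (cl_inverse y) = id"
      using assms(2) rho_cl_vec_prod[of "[]"] by (simp add: Pin_inverse flip: rho_mult)
    then show ?thesis
      using assms by (simp add: rho_mult Pin_inverse)
  qed
  ultimately have "?z = cl_one \<or> ?z = - cl_one"
    by (rule Pin_rho_eq_id)
  moreover have "x = cl_mult ?z y"
    using assms(2) by (simp add: cl_mult_assoc Pin_inverse)
  ultimately show ?thesis
    by auto
qed

section \<open>Lifting orthogonal involutions\<close>

definition orthonormal_list :: "'a::real_inner list \<Rightarrow> bool" where
  "orthonormal_list fs \<longleftrightarrow> distinct fs \<and> (\<forall>f\<in>set fs. norm f = 1) \<and> pairwise orthogonal (set fs)"

lemma orthonormal_list_Cons:
  "orthonormal_list (f # fs) \<longleftrightarrow>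
     orthonormal_list fs \<and> norm f = 1 \<and> f \<notin> set fs \<and> (\<forall>g\<in>set fs. f \<bullet> g = 0)"
  unfolding orthonormal_list_def by (auto simp: pairwise_insert orthogonal_def inner_commute)

lemma reflections_orthonormal:
  "orthonormal_list fs \<Longrightarrow> reflections fs v = v - 2 *\<^sub>R (\<Sum>f\<in>set fs. (v \<bullet> f) *\<^sub>R f)"
proof (induction fs)
  case (Cons f fs)
  let ?w = "v - 2 *\<^sub>R (\<Sum>g\<in>set fs. (v \<bullet> g) *\<^sub>R g)"
  have f: "orthonormal_list fs" "f \<notin> set fs" "\<forall>g\<in>set fs. f \<bullet> g = 0"
    using Cons.prems by (simp_all add: orthonormal_list_Cons)
  then have "f \<bullet> ?w = f \<bullet> v"
    by (simp add: inner_diff_right inner_sum_right)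
  then have "reflections (f # fs) v = ?w - (2 * (f \<bullet> v)) *\<^sub>R f"
    using Cons.IH f(1) by (simp add: reflection_def)
  then show ?case
    using f(2) by (simp add: algebra_simps inner_commute)
qed simp

lemma trace_reflections_orthonormal:
  fixes fs :: "(real^'m) list"
  assumes "orthonormal_list fs"
  shows "trace (matrix (reflections fs)) = real CARD('m) - 2 * real (length fs)"
proof -
  have unit: "(\<Sum>i\<in>UNIV. f $ i * f $ i) = 1" if "f \<in> set fs" for f
  proof -
    have "f \<bullet> f = 1"
      using assms that unfolding orthonormal_list_def by (simp add: dot_square_norm)
    then show ?thesis
      by (simp add: inner_vec_def)
  qed
  have "trace (matrix (reflections fs)) = (\<Sum>i\<in>UNIV. 1 - 2 * (\<Sum>f\<in>set fs. f $ i * f $ i))"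
    unfolding trace_def matrix_def reflections_orthonormal[OF assms]
    by (simp add: inner_commute inner_axis sum_component)
  also have "\<dots> = real CARD('m) - 2 * (\<Sum>f\<in>set fs. \<Sum>i\<in>UNIV. f $ i * f $ i)"
    by (simp add: sum_subtractf sum_distrib_left[symmetric] sum.swap[of _ "set fs"])
  also have "\<dots> = real CARD('m) - 2 * real (length fs)"
    using assms unit by (simp add: orthonormal_list_def distinct_card)
  finally show ?thesis .
qed

lemma orthogonal_involution_eq_reflections:
  fixes T :: "real^'m \<Rightarrow> real^'m"
  assumes T: "orthogonal_transformation T" and inv: "\<And>v. T (T v) = v"
  obtains fs where "orthonormal_list fs" "reflections fs = T"
proof -
  have lin: "linear T"
    using T by (rule orthogonal_transformation_linear)
  let ?E = "{v. T v = - v}"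
  have "subspace ?E"
    unfolding subspace_def using lin by (simp add: linear_0 linear_add linear_cmul)
  then obtain B where B: "B \<subseteq> ?E" "pairwise orthogonal B" "\<And>x. x \<in> B \<Longrightarrow> norm x = 1"
      "independent B" "span B = ?E"
    by (rule orthonormal_basis_subspace) blast
  have fin: "finite B"
    using B(4) by (rule finiteI_independent)
  then obtain fs where fs: "set fs = B" "distinct fs"
    using finite_distinct_list by blast
  have ofs: "orthonormal_list fs"
    unfolding orthonormal_list_def using fs B(2,3) by auto
  have proj: "(\<Sum>f\<in>B. (v \<bullet> f) *\<^sub>R f) = (1/2) *\<^sub>R (v - T v)" for v
  proof -
    let ?w = "(1/2) *\<^sub>R (v - T v)"
    have "T ?w = - ?w"
      using lin inv by (simp add: linear_cmul linear_diff)
    then have "(\<Sum>f\<in>B. (?w \<bullet> f) *\<^sub>R f) = ?w"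
      using orthonormal_basis_expand[OF B(2) _ _ fin] B(3,5) by blast
    moreover have "v \<bullet> f = ?w \<bullet> f" if "f \<in> B" for f
    proof -
      have "T (- f) = f"
        using B(1) that lin by (auto simp: linear_neg)
      then have "T v \<bullet> f = T v \<bullet> T (- f)"
        by simp
      also have "\<dots> = - (v \<bullet> f)"
        using T lin unfolding orthogonal_transformation_def by (simp add: linear_neg)
      finally show ?thesis
        by (simp add: inner_diff_left)
    qed
    ultimately show ?thesis
      by (metis (no_types, lifting) sum.cong)
  qed
  have "reflections fs = T"
    unfolding fun_eq_iff reflections_orthonormal[OF ofs] fs(1) proj by (simp add: algebra_simps)
  with ofs show ?thesis
    by (rule that)
qed

lemma cl_vec_commute_prod_orthogonal:
  "\<forall>g\<in>set gs. f \<bullet> g = 0 \<Longrightarrow>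
    cl_mult (cl_vec f) (cl_vec_prod gs)
      = cl_scale ((-1) ^ length gs) (cl_mult (cl_vec_prod gs) (cl_vec f))"
proof (induction gs)
  case (Cons g gs)
  have "cl_mult (cl_vec f) (cl_vec_prod (g # gs))
      = - cl_mult (cl_vec g) (cl_mult (cl_vec f) (cl_vec_prod gs))"
    using Cons.prems by (simp add: cl_vec_anticomm_orthogonal flip: cl_mult_assoc)
  then show ?case
    using Cons by (simp add: cl_mult_scale_right cl_mult_assoc flip: cl_scale_minus_one)
qed simp

lemma cl_vec_prod_square_orthonormal:
  "orthonormal_list fs \<Longrightarrow>
    cl_mult (cl_vec_prod fs) (cl_vec_prod fs)
      = (if length fs mod 4 = 0 \<or> length fs mod 4 = 3 then cl_one else - cl_one)"
proof (induction fs)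
  case (Cons f fs)
  let ?P = "cl_vec_prod fs"
  have f: "orthonormal_list fs" "norm f = 1" "\<forall>g\<in>set fs. f \<bullet> g = 0"
    using Cons.prems by (simp_all add: orthonormal_list_Cons)
  have "cl_mult (cl_vec_prod (f # fs)) (cl_vec_prod (f # fs))
      = cl_scale ((-1) ^ length fs) (cl_mult ?P (cl_mult (cl_mult (cl_vec f) (cl_vec f)) ?P))"
    using f(3) by (simp add: cl_vec_commute_prod_orthogonal cl_mult_scale_left cl_mult_assoc)
  also have "\<dots> = cl_scale (- ((-1) ^ length fs)) (cl_mult ?P ?P)"
    using f(2) by (simp add: cl_vec_unit_square cl_scale_def fun_eq_iff)
  also have "\<dots>
      = (if length (f # fs) mod 4 = 0 \<or> length (f # fs) mod 4 = 3 then cl_one else - cl_one)"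
  proof -
    have "(Suc n mod 4 = 0 \<or> Suc n mod 4 = 3) \<longleftrightarrow> ((n mod 4 = 0 \<or> n mod 4 = 3) \<longleftrightarrow> odd n)"
      for n :: nat
      by presburger
    then show ?thesis
      using Cons.IH[OF f(1)] by (auto simp: cl_scale_def fun_eq_iff)
  qed
  finally show ?case .
qed simp

lemma orthogonal_involution_lift:
  fixes T :: "real^('m::{finite,linorder}) \<Rightarrow> real^('m::{finite,linorder})"
  assumes "orthogonal_transformation T" "\<And>v. T (T v) = v"
  obtains x d where "x \<in> Pin" "rho x = T" "trace (matrix T) = real CARD('m) - 2 * real d"
proof -
  obtain fs where fs: "orthonormal_list fs" "reflections fs = T"
    using orthogonal_involution_eq_reflections[OF assms] .
  then have "\<forall>u\<in>set fs. norm u = 1"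
    by (simp add: orthonormal_list_def)
  then show ?thesis
    using that cl_vec_prod_in_Pin rho_cl_vec_prod trace_reflections_orthonormal fs by metis
qed

lemma Pin_lift_involution_square:
  fixes T :: "real^('m::{finite,linorder}) \<Rightarrow> real^('m::{finite,linorder})"
  assumes "orthogonal_transformation T" "\<And>v. T (T v) = v" "x \<in> Pin" "rho x = T"
    and "trace (matrix T) = real CARD('m) - 2 * real d"
  shows "cl_mult x x = cl_one \<longleftrightarrow> d mod 4 = 0 \<or> d mod 4 = 3"
proof -
  obtain fs where fs: "orthonormal_list fs" "reflections fs = T"
    using orthogonal_involution_eq_reflections[OF assms(1,2)] .
  have "length fs = d"
    using trace_reflections_orthonormal[OF fs(1)] fs(2) assms(5) by simp
  have "\<forall>u\<in>set fs. norm u = 1"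
    using fs(1) by (simp add: orthonormal_list_def)
  then have "x = cl_vec_prod fs \<or> x = - cl_vec_prod fs"
    using assms(3,4) fs(2)
    by (intro Pin_rho_eq_cases cl_vec_prod_in_Pin) (simp_all add: rho_cl_vec_prod)
  then have "cl_mult x x = cl_mult (cl_vec_prod fs) (cl_vec_prod fs)"
    by auto
  also have "\<dots> = (if d mod 4 = 0 \<or> d mod 4 = 3 then cl_one else - cl_one)"
    using cl_vec_prod_square_orthonormal[OF fs(1)] \<open>length fs = d\<close> by simp
  finally show ?thesis
    using minus_cl_one_neq_cl_one by (cases "d mod 4 = 0 \<or> d mod 4 = 3") simp_all
qed

lemma Pin_lift_path_relations:
  assumes lift: "\<And>i. i \<in> I \<Longrightarrow> \<exists>y\<in>Pin. rho y = T i \<and> cl_mult y y = cl_one"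
    and braid: "\<And>i. i \<in> J \<Longrightarrow>
      (T i \<circ> T (Suc i)) \<circ> (T i \<circ> T (Suc i)) \<circ> (T i \<circ> T (Suc i)) = id"
    and J: "\<And>i. i \<in> J \<Longrightarrow> i \<in> I \<and> Suc i \<in> I"
  obtains x where "\<forall>i\<in>I. x i \<in> Pin \<and> rho (x i) = T i \<and> cl_mult (x i) (x i) = cl_one"
    "\<forall>i\<in>J. cl_cube (cl_mult (x i) (x (Suc i))) = cl_one"
proof -
  have "\<forall>i\<in>I. \<exists>y. y \<in> Pin \<and> rho y = T i \<and> cl_mult y y = cl_one"
    using lift by blast
  then obtain Y where Y: "\<forall>i\<in>I. Y i \<in> Pin \<and> rho (Y i) = T i \<and> cl_mult (Y i) (Y i) = cl_one"
    by (rule bchoice[elim_format]) blast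
  \<comment> \<open>Negating the next lift negates the cube, so each cube can be made cl_one in turn.\<close>
  define x where "x = rec_nat (Y 0) (\<lambda>i xi.
    if cl_cube (cl_mult xi (Y (Suc i))) = cl_one then Y (Suc i) else - Y (Suc i))"
  have x_Suc: "x (Suc i)
      = (if cl_cube (cl_mult (x i) (Y (Suc i))) = cl_one then Y (Suc i) else - Y (Suc i))" for i
    by (simp add: x_def)
  have "x i = Y i \<or> x i = - Y i" for i
    by (cases i) (simp_all add: x_def)
  then have x: "\<forall>i\<in>I. x i \<in> Pin \<and> rho (x i) = T i \<and> cl_mult (x i) (x i) = cl_one"
    using Y Pin_uminus by (metis cl_mult_minus_left cl_mult_minus_right minus_minus)
  have "cl_cube (cl_mult (x i) (x (Suc i))) = cl_one" if i: "i \<in> J" for i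
  proof -
    let ?w = "cl_mult (x i) (Y (Suc i))"
    have w: "?w \<in> Pin" "rho ?w = T i \<circ> T (Suc i)"
      using x Y J[OF i] by (simp_all add: Pin_mult rho_mult)
    then have "cl_cube ?w \<in> Pin" "rho (cl_cube ?w) = id"
      using Pin_cube[OF w(1)] braid[OF i] by simp_all
    then have "cl_cube ?w = cl_one \<or> cl_cube ?w = - cl_one"
      by (rule Pin_rho_eq_id)
    then show ?thesis
    proof
      assume "cl_cube ?w = - cl_one"
      then show ?thesis
        using minus_cl_one_neq_cl_one by (simp add: x_Suc cl_cube_uminus)
    qed (simp add: x_Suc)
  qed
  with x show ?thesis
    using that by blast
qed

section \<open>Simple transpositions in an orthogonal representation\<close>

lemma transp_permutes: "i \<in> {1..n} \<Longrightarrow> j \<in> {1..n} \<Longrightarrow> transp i j permutes {1..n}"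
  unfolding transp_def by (rule permutes_swap_id)

lemma transp_Suc_permutes: "i \<in> {1..n-1} \<Longrightarrow> transp i (Suc i) permutes {1..n}"
  by (rule transp_permutes) auto

lemma transp_involutive: "transp i j \<circ> transp i j = id"
  unfolding transp_def by (rule transpose_comp_involutory)

lemma transp_braid:
  "(transp i (Suc i) \<circ> transp (Suc i) (Suc (Suc i)))
     \<circ> (transp i (Suc i) \<circ> transp (Suc i) (Suc (Suc i)))
     \<circ> (transp i (Suc i) \<circ> transp (Suc i) (Suc (Suc i))) = id"
  by (rule ext) (simp add: transp_def Transposition.transpose_def)

lemma transp_conj:
  "transp (Suc i) (Suc (Suc i))
     = (transp i (Suc i) \<circ> transp (Suc i) (Suc (Suc i))) \<circ> transp i (Suc i)
         \<circ> (transp (Suc i) (Suc (Suc i)) \<circ> transp i (Suc i))"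
  by (rule ext) (simp add: transp_def Transposition.transpose_def)

context
  fixes n :: nat
    and \<pi> :: "(nat \<Rightarrow> nat) \<Rightarrow> real^('m::{finite,linorder}) \<Rightarrow> real^('m::{finite,linorder})"
  assumes rep: "orth_rep n \<pi>"
begin

lemma orth_rep_orthogonal: "\<sigma> permutes {1..n} \<Longrightarrow> orthogonal_transformation (\<pi> \<sigma>)"
  using rep unfolding orth_rep_def by blast

lemma orth_rep_comp: "\<sigma> permutes {1..n} \<Longrightarrow> \<tau> permutes {1..n} \<Longrightarrow> \<pi> (\<sigma> \<circ> \<tau>) = \<pi> \<sigma> \<circ> \<pi> \<tau>"
  using rep unfolding orth_rep_def by blast

lemma orth_rep_id: "\<pi> id = id"
proof -
  have "\<pi> id \<circ> \<pi> id = \<pi> id"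
    using orth_rep_comp[OF permutes_id permutes_id] by simp
  moreover have "inj (\<pi> id)"
    using orth_rep_orthogonal[OF permutes_id] by (rule orthogonal_transformation_inj)
  ultimately show ?thesis
    by (metis fun.map_comp id_comp inj_iff)
qed

lemma character_id: "character \<pi> id = real CARD('m)"
  by (simp add: character_def orth_rep_id matrix_id_mat_1 trace_I)

lemma orth_rep_comp_inverse:
  "\<sigma> permutes {1..n} \<Longrightarrow> \<tau> permutes {1..n} \<Longrightarrow> \<sigma> \<circ> \<tau> = id \<Longrightarrow> \<pi> \<sigma> \<circ> \<pi> \<tau> = id"
  by (metis orth_rep_comp orth_rep_id)

lemma character_conj:
  assumes "\<sigma> permutes {1..n}" "\<tau> permutes {1..n}" "\<tau>' permutes {1..n}" "\<tau>' \<circ> \<tau> = id"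
  shows "character \<pi> (\<tau> \<circ> \<sigma> \<circ> \<tau>') = character \<pi> \<sigma>"
proof -
  have lin: "linear (\<pi> \<rho>)" if "\<rho> permutes {1..n}" for \<rho>
    using orth_rep_orthogonal[OF that] by (rule orthogonal_transformation_linear)
  let ?A = "matrix (\<pi> \<tau>)" and ?B = "matrix (\<pi> \<sigma>)" and ?C = "matrix (\<pi> \<tau>')"
  have "?C ** ?A = matrix (\<pi> \<tau>' \<circ> \<pi> \<tau>)"
    using matrix_compose[OF lin[OF assms(2)] lin[OF assms(3)]] by simp
  also have "\<dots> = mat 1"
    using orth_rep_comp_inverse[OF assms(3,2,4)] by (simp add: matrix_id_mat_1)
  finally have "?C ** ?A = mat 1" .
  moreover have "matrix (\<pi> (\<tau> \<circ> \<sigma> \<circ> \<tau>')) = ?A ** ?B ** ?C"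
    using assms by (simp add: orth_rep_comp permutes_compose lin linear_compose matrix_compose)
  ultimately show ?thesis
    unfolding character_def by (metis trace_mul_sym matrix_mul_assoc matrix_mul_lid)
qed

lemma orth_rep_transp:
  assumes "i \<in> {1..n-1}"
  shows "orthogonal_transformation (\<pi> (transp i (Suc i)))"
    "\<pi> (transp i (Suc i)) (\<pi> (transp i (Suc i)) v) = v"
    "character \<pi> (transp i (Suc i)) = character \<pi> (transp 1 2)"
proof -
  show "orthogonal_transformation (\<pi> (transp i (Suc i)))"
    using transp_Suc_permutes[OF assms] by (rule orth_rep_orthogonal)
  show "\<pi> (transp i (Suc i)) (\<pi> (transp i (Suc i)) v) = v"
    using orth_rep_comp_inverse[OF transp_Suc_permutes[OF assms] transp_Suc_permutes[OF assms]
        transp_involutive]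
    by (metis comp_apply id_apply)
  show "character \<pi> (transp i (Suc i)) = character \<pi> (transp 1 2)"
    using assms
  proof (induction i)
    case (Suc i)
    show ?case
    proof (cases "i = 0")
      case False
      then have i: "i \<in> {1..n-1}" "Suc i \<in> {1..n-1}"
        using Suc.prems by auto
      let ?s = "transp i (Suc i)" and ?s' = "transp (Suc i) (Suc (Suc i))"
      have "(?s' \<circ> ?s) \<circ> (?s \<circ> ?s') = id"
        using transp_involutive by (metis comp_assoc comp_id)
      then have "character \<pi> ((?s \<circ> ?s') \<circ> ?s \<circ> (?s' \<circ> ?s)) = character \<pi> ?s"
        using transp_Suc_permutes[OF i(1)] transp_Suc_permutes[OF i(2)]
        by (intro character_conj permutes_compose)
      then show ?thesis
        using Suc.IH[OF i(1)] transp_conj[of i] by simp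
    qed (simp add: numeral_2_eq_2)
  qed simp
qed

lemma orth_rep_braid:
  assumes "i \<in> {1..n-2}"
  shows "(\<pi> (transp i (Suc i)) \<circ> \<pi> (transp (Suc i) (Suc (Suc i))))
    \<circ> (\<pi> (transp i (Suc i)) \<circ> \<pi> (transp (Suc i) (Suc (Suc i))))
    \<circ> (\<pi> (transp i (Suc i)) \<circ> \<pi> (transp (Suc i) (Suc (Suc i)))) = id"
proof -
  have "transp i (Suc i) permutes {1..n}" "transp (Suc i) (Suc (Suc i)) permutes {1..n}"
    using assms transp_Suc_permutes[of i n] transp_Suc_permutes[of "Suc i" n] by auto
  then show ?thesis
    using transp_braid[of i] by (metis orth_rep_comp orth_rep_id permutes_compose)
qed

end

theorem proposition3p1:
  fixes n :: nat and \<pi> :: "(nat \<Rightarrow> nat) \<Rightarrow> real^('m::{finite,linorder}) \<Rightarrow> real^('m::{finite,linorder})"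
  assumes "n \<ge> 2" and "orth_rep n \<pi>"
  defines "g \<equiv> (character \<pi> id - character \<pi> (transp 1 2)) / 2"
  shows "(\<exists>x :: nat \<Rightarrow> ('m::{finite,linorder}) cl.
            (\<forall>i\<in>{1..n-1}. x i \<in> Pin \<and> rho (x i) = \<pi> (transp i (i+1))
                             \<and> cl_mult (x i) (x i) = cl_one) \<and>
            (\<forall>i\<in>{1..n-2}. cl_cube (cl_mult (x i) (x (i+1))) = cl_one))
         \<longleftrightarrow> (\<exists>k::int. g = of_int k \<and> (k mod 4 = 0 \<or> k mod 4 = 3))"
proof -
  let ?T = "\<lambda>i. \<pi> (transp i (Suc i))"
  note T = orth_rep_transp[OF assms(2)]
  have one: "1 \<in> {1..n-1}"
    using assms(1) by auto
  obtain d where d: "trace (matrix (?T 1)) = real CARD('m) - 2 * real d"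
    using orthogonal_involution_lift[OF T(1,2)[OF one]] by metis
  have square: "cl_mult y y = cl_one \<longleftrightarrow> d mod 4 = 0 \<or> d mod 4 = 3"
    if "i \<in> {1..n-1}" "y \<in> Pin" "rho y = ?T i" for i y
    using Pin_lift_involution_square[OF T(1,2)[OF that(1)] that(2,3)] T(3)[OF that(1)] d
    by (simp add: character_def numeral_2_eq_2)
  have "g = of_int k \<longleftrightarrow> k = int d" for k
    using d unfolding g_def character_id[OF assms(2)]
    by (simp add: character_def numeral_2_eq_2) (metis of_int_eq_iff of_int_of_nat_eq)
  then have g: "(\<exists>k::int. g = of_int k \<and> (k mod 4 = 0 \<or> k mod 4 = 3))
      \<longleftrightarrow> d mod 4 = 0 \<or> d mod 4 = 3"
    by simp presburger
  show ?thesis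
  proof (rule iffI, goal_cases)
    case 1
    then obtain x
      where "\<forall>i\<in>{1..n-1}. x i \<in> Pin \<and> rho (x i) = \<pi> (transp i (i+1)) \<and> cl_mult (x i) (x i) = cl_one"
      by blast
    then have "x 1 \<in> Pin \<and> rho (x 1) = ?T 1 \<and> cl_mult (x 1) (x 1) = cl_one"
      using one by auto
    then show ?case
      using square[OF one, of "x 1"] g by metis
  next
    case 2
    then have lift: "\<exists>y\<in>Pin. rho y = ?T i \<and> cl_mult y y = cl_one" if "i \<in> {1..n-1}" for i
      using orthogonal_involution_lift[OF T(1,2)[OF that]] square[OF that] g by metis
    obtain x where "\<forall>i\<in>{1..n-1}. x i \<in> Pin \<and> rho (x i) = ?T i \<and> cl_mult (x i) (x i) = cl_one"
      and "\<forall>i\<in>{1..n-2}. cl_cube (cl_mult (x i) (x (Suc i))) = cl_one"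
      by (rule Pin_lift_path_relations[of "{1..n-1}" ?T "{1..n-2}"])
        (use lift orth_rep_braid[OF assms(2)] in auto)
    then show ?case
      by auto
  qed
qed

end
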